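(* Let $k\ge2$, let $\Pi\subsetneq\Sigma_k$ be a proper subshift, and let $T:\Pi\to\Sigma_k$ be the map constructed below. Then for every $y\in\Pi$, $\omega_{B^*}(T(y))\subseteq\Pi\subsetneq\omega_\sigma(T(y))$. In particular $T(y)\in Rec(\Sigma_k)\setminus BR(\Sigma_k)$.
   Context: $\Sigma_k=\{0,\dots,k-1\}^{\mathbb{N}}$ with metric $d(x,y)=\sum_{n\ge1}\delta(x_n,y_n)/2^n$ ($\delta(a,b)=0$ if $a=b$, $1$ otherwise) and shift $\sigma$. A subshift is a nonempty closed $\sigma$-invariant subset. A finite word $A$ is contained in $\Pi$ if it is a prefix of some point of $\Pi$. Construction of $T$: enumerate all finite words contained in $\Pi$ as $C_1,C_2,\dots$; fix a finite word $A_1$ not contained in $\Pi$; for $y\in\Pi$ let $Y_n$ be its first $n$ symbols; set $B_n=C_nY_nY_n\cdots Y_n$ ($Y_n$ repeated $|A_n|^2$ times) and $A_{n+1}=A_nB_nA_n$; $T(y)$ is the point of $\Sigma_k$ having every $A_n$ as a prefix. The construction requires $|C_n|=o(|A_n|)$ as $n\to\infty$. $N(x,U)=\{n\ge1:\sigma^nx\in U\}$; $B^*(S)=\limsup_{|I|\to\infty}|S\cap I|/|I|$ over intervals of consecutive integers; $\omega_{B^*}(x)=\{z: B^*(N(x,B_\varepsilon(z)))>0\ \forall\varepsilon>0\}$; $\omega_\sigma(x)$ is the $\omega$-limit set. $x\in Rec$ if $N(x,B_\varepsilon(x))\ne\emptyset$ for all $\varepsilon>0$; $x\in BR$ if $B^*(N(x,B_\varepsilon(x)))>0$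 for all $\varepsilon>0$. *)

theory Defs
  imports Complex_Main "HOL-Library.Landau_Symbols"
begin

text \<open>Points of the full shift are sequences indexed from 0: the paper's x_1 x_2 ...
  is represented by x 0, x 1, ...\<close>

definition fullshift :: "nat \<Rightarrow> (nat \<Rightarrow> nat) set" where
  "fullshift k = {x. \<forall>n. x n < k}"

definition shiftd :: "(nat \<Rightarrow> nat) \<Rightarrow> (nat \<Rightarrow> nat) \<Rightarrow> real" where
  "shiftd x y = (\<Sum>n. (if x n = y n then 0 else 1) / 2 ^ Suc n)"

definition shift :: "(nat \<Rightarrow> nat) \<Rightarrow> (nat \<Rightarrow> nat)" where
  "shift x = (\<lambda>n. x (Suc n))"

definition sball :: "nat \<Rightarrow> (nat \<Rightarrow> nat) \<Rightarrow> real \<Rightarrow> (nat \<Rightarrow> nat) set" where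
  "sball k z e = {x \<in> fullshift k. shiftd x z < e}"

definition subshift :: "nat \<Rightarrow> (nat \<Rightarrow> nat) set \<Rightarrow> bool" where
  "subshift k P \<longleftrightarrow> P \<noteq> {} \<and> P \<subseteq> fullshift k
     \<and> (\<forall>z \<in> fullshift k. (\<forall>e>0. \<exists>x\<in>P. shiftd x z < e) \<longrightarrow> z \<in> P)
     \<and> shift ` P \<subseteq> P"

definition is_prefix :: "nat list \<Rightarrow> (nat \<Rightarrow> nat) \<Rightarrow> bool" where
  "is_prefix w x \<longleftrightarrow> (\<forall>i < length w. x i = w ! i)"

definition contained :: "nat list \<Rightarrow> (nat \<Rightarrow> nat) set \<Rightarrow> bool" where
  "contained w P \<longleftrightarrow> (\<exists>x \<in> P. is_prefix w x)"

definition visits :: "nat \<Rightarrow> (nat \<Rightarrow> nat) \<Rightarrow> (nat \<Rightarrow> nat) set \<Rightarrow> nat set" where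
  "visits k x U = {n. n \<ge> 1 \<and> (shift ^^ n) x \<in> U}"

definition upper_banach_density :: "nat set \<Rightarrow> real" where
  "upper_banach_density S =
     (INF L \<in> {1::nat..}. SUP p \<in> {(m, l). l \<ge> L}.
        real (card (S \<inter> {fst p..<fst p + snd p})) / real (snd p))"

definition omega_B :: "nat \<Rightarrow> (nat \<Rightarrow> nat) \<Rightarrow> (nat \<Rightarrow> nat) set" where
  "omega_B k x = {z \<in> fullshift k. \<forall>e>0. upper_banach_density (visits k x (sball k z e)) > 0}"

definition omega_sigma :: "nat \<Rightarrow> (nat \<Rightarrow> nat) \<Rightarrow> (nat \<Rightarrow> nat) set" where
  "omega_sigma k x = {z \<in> fullshift k. \<forall>e>0. infinite {n. shiftd ((shift ^^ n) x) z < e}}"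

definition Rec :: "nat \<Rightarrow> (nat \<Rightarrow> nat) set" where
  "Rec k = {x \<in> fullshift k. \<forall>e>0. visits k x (sball k x e) \<noteq> {}}"

definition BR :: "nat \<Rightarrow> (nat \<Rightarrow> nat) set" where
  "BR k = {x \<in> fullshift k. \<forall>e>0. upper_banach_density (visits k x (sball k x e)) > 0}"

text \<open>The words A_n (index n \<ge> 1; the value at 0 is irrelevant):
  A_1 = A1, A_(n+1) = A_n B_n A_n with B_n = C_n Y_n^(|A_n|^2), Y_n = first n symbols of y.\<close>
primrec Aw :: "(nat \<Rightarrow> nat list) \<Rightarrow> nat list \<Rightarrow> (nat \<Rightarrow> nat) \<Rightarrow> nat \<Rightarrow> nat list" where
  "Aw C A1 y 0 = A1"
| "Aw C A1 y (Suc n) =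
     (if n = 0 then A1
      else Aw C A1 y n @ (C n @ concat (replicate ((length (Aw C A1 y n))\<^sup>2) (map y [0..<n])))
           @ Aw C A1 y n)"

definition Tmap :: "(nat \<Rightarrow> nat list) \<Rightarrow> nat list \<Rightarrow> (nat \<Rightarrow> nat) \<Rightarrow> (nat \<Rightarrow> nat)" where
  "Tmap C A1 y = (THE x. \<forall>n \<ge> 1. is_prefix (Aw C A1 y n) x)"

end

theory Submission
  imports Defs "HOL-Library.Infinite_Set"
begin

text \<open>Write x = T(y). Since x begins with A_1, which is not a word of \<Pi>, x lies outside \<Pi>.
  Because A_(n+1) = A_n B_n A_n, the prefix A_n reappears at position |A_n B_n|, so x returns
  arbitrarily close to itself; and since every word of \<Pi> occurs as some C_n, right after a copy
  of A_n, x comes arbitrarily close to every point of \<Pi>. Hence \<Pi> \<union> {x} \<subseteq> \<omega>_\<sigma>(x) and x is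
  recurrent.

  Conversely, if z is not in \<Pi>, some prefix w of z, of length m, is not a word of \<Pi>, and every
  visit of x near z starts a window of length m that is not a word of \<Pi>. Cut x into blocks
  A_n0 C_j Y_j^(|A_j|^2) with j \<ge> n0. Inside a block such a window starts in the copy of A_n0,
  within m of the end of C_j, or within m of the end of a period of Y_j, because C_j and Y_j
  are words of \<Pi> and \<Pi> is shift invariant. On any interval the proportion of these positions
  is at most about 3m/n0 up to a bounded error, so their upper Banach density is 0, and
  \<omega>_B*(x) \<subseteq> \<Pi>; in particular x is not Banach recurrent.\<close>

section \<open>The metric on the full shift\<close>

lemma funpow_shift_apply: "(shift ^^ t) x i = x (t + i)"
  by (induction t arbitrary: i) (auto simp: shift_def)

lemma funpow_shift_fullshift: "x \<in> fullshift k \<Longrightarrow> (shift ^^ t) x \<in> fullshift k"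
  by (auto simp: fullshift_def funpow_shift_apply)

lemma summable_shiftd: "summable (\<lambda>n. (if x n = y n then 0 else 1) / (2::real) ^ Suc n)"
proof (rule summable_comparison_test)
  show "\<exists>N. \<forall>n\<ge>N. norm ((if x n = y n then 0 else 1) / (2::real) ^ Suc n) \<le> (1/2) ^ Suc n"
    by (auto simp: power_divide)
  show "summable (\<lambda>n. (1/2::real) ^ Suc n)"
    using summable_geometric[of "1/2::real"] by (simp add: summable_Suc_iff)
qed

lemma agree_if_shiftd_less:
  assumes "shiftd x y < 1 / 2 ^ M" "i < M"
  shows "x i = y i"
proof (rule ccontr)
  assume "x i \<noteq> y i"
  hence "(\<Sum>n\<in>{i}. (if x n = y n then 0 else 1) / (2::real) ^ Suc n) \<le> shiftd x y"
    unfolding shiftd_def by (intro sum_le_suminf summable_shiftd) auto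
  moreover have "(1::real) / 2 ^ M \<le> 1 / 2 ^ Suc i"
    using assms(2) by (intro divide_left_mono power_increasing) auto
  ultimately show False using assms(1) \<open>x i \<noteq> y i\<close> by simp
qed

lemma shiftd_le_if_agree:
  assumes "\<And>i. i < M \<Longrightarrow> x i = y i"
  shows "shiftd x y \<le> 1 / 2 ^ M"
proof -
  let ?f = "\<lambda>n. (if x n = y n then 0 else 1) / (2::real) ^ Suc n"
  have "shiftd x y = (\<Sum>n. ?f (n + M)) + sum ?f {..<M}"
    unfolding shiftd_def by (rule suminf_split_initial_segment[OF summable_shiftd])
  also have "sum ?f {..<M} = 0" using assms by simp
  also have "(\<Sum>n. ?f (n + M)) \<le> (\<Sum>n. (1/2) ^ Suc M * (1/2::real) ^ n)"
  proof (rule suminf_le)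
    show "summable (\<lambda>n. ?f (n + M))"
      using summable_iff_shift[of ?f M] summable_shiftd[of x y] by blast
    show "summable (\<lambda>n. (1/2) ^ Suc M * (1/2::real) ^ n)"
      by (intro summable_mult summable_geometric) auto
    show "?f (n + M) \<le> (1/2) ^ Suc M * (1/2::real) ^ n" for n
      by (auto simp: power_add power_divide mult_ac)
  qed
  also have "(\<Sum>n. (1/2) ^ Suc M * (1/2::real) ^ n) = 1 / 2 ^ M"
    by (subst suminf_mult) (auto simp: suminf_geometric power_divide)
  finally show ?thesis by simp
qed

lemma obtain_agreement_length:
  assumes "0 < e"
  obtains M where "\<And>x y. (\<And>i. i < M \<Longrightarrow> x i = y i) \<Longrightarrow> shiftd x y < e"
proof -
  obtain M where "(1/2::real) ^ M < e" using real_arch_pow_inv[OF assms, of "1/2"] by auto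
  hence "1 / 2 ^ M < e" by (simp add: power_one_over)
  have "shiftd x y < e" if "\<And>i. i < M \<Longrightarrow> x i = y i" for x y :: "nat \<Rightarrow> nat"
  proof -
    have "shiftd x y \<le> 1 / 2 ^ M" by (rule shiftd_le_if_agree) (rule that)
    with \<open>1 / 2 ^ M < e\<close> show ?thesis by linarith
  qed
  thus ?thesis by (rule that)
qed

lemma infinite_close_returns:
  assumes "\<And>M N. \<exists>t\<ge>N. \<forall>i<M. x (t + i) = z i" and "0 < e"
  shows "infinite {t. shiftd ((shift ^^ t) x) z < e}"
  unfolding infinite_nat_iff_unbounded_le
proof
  fix N
  obtain M where M: "\<And>x y. (\<And>i. i < M \<Longrightarrow> x i = y i) \<Longrightarrow> shiftd x y < e"
    using obtain_agreement_length[OF assms(2)] by blast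
  obtain t where "N \<le> t" "\<forall>i<M. x (t + i) = z i" using assms(1) by blast
  with M show "\<exists>t\<ge>N. t \<in> {t. shiftd ((shift ^^ t) x) z < e}"
    by (auto simp: funpow_shift_apply)
qed

section \<open>Upper Banach density\<close>

lemma upper_banach_density_le:
  assumes "1 \<le> L" and "\<And>p l. L \<le> l \<Longrightarrow> real (card (V \<inter> {p..<p+l})) / real l \<le> c"
  shows "upper_banach_density V \<le> c"
proof -
  let ?r = "\<lambda>q::nat \<times> nat. real (card (V \<inter> {fst q..<fst q + snd q})) / real (snd q)"
  let ?F = "\<lambda>L::nat. SUP q \<in> {(m, l). l \<ge> L}. ?r q"
  have "?r q \<le> 1" for q
    by (cases "snd q = 0") (auto simp: divide_le_eq intro: order_trans[OF card_mono[of "{_..<_}"]])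
  hence bdd: "bdd_above (?r ` Q)" for Q by (intro bdd_aboveI[of _ 1]) auto
  have "0 \<le> ?F L'" for L'
  proof -
    have "?r (0, L') \<le> ?F L'" by (rule cSUP_upper[OF _ bdd]) simp
    moreover have "0 \<le> ?r (0, L')" by simp
    ultimately show ?thesis by linarith
  qed
  hence "bdd_below (?F ` {1..})" by (intro bdd_belowI[of _ 0]) auto
  hence "upper_banach_density V \<le> ?F L"
    unfolding upper_banach_density_def using assms(1) by (intro cINF_lower) auto
  also have "\<dots> \<le> c"
    using assms(2) by (intro cSUP_least) auto
  finally show ?thesis .
qed

lemma upper_banach_density_nonpos:
  assumes "\<And>\<alpha>. 0 < \<alpha> \<Longrightarrow> \<exists>K. \<forall>p l. real (card (V \<inter> {p..<p+l})) \<le> \<alpha> * l + K"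
  shows "upper_banach_density V \<le> 0"
proof (rule field_le_epsilon)
  fix e :: real assume "0 < e"
  then obtain K where K: "\<And>p l. real (card (V \<inter> {p..<p+l})) \<le> e / 2 * l + K"
    using assms[of "e / 2"] by auto
  obtain L :: nat where L: "max 1 (2 * K / e) \<le> L" using real_arch_simple by blast
  have "upper_banach_density V \<le> e"
  proof (rule upper_banach_density_le)
    show "1 \<le> L" using L by linarith
    fix p l assume "L \<le> l"
    have "0 < real l" using L \<open>L \<le> l\<close> by linarith
    have "2 * K \<le> e * L" using L \<open>0 < e\<close> by (simp add: field_simps)
    also have "\<dots> \<le> e * l" using \<open>L \<le> l\<close> \<open>0 < e\<close> by simp
    finally have "K \<le> e / 2 * l" by simp
    with K[of p l] \<open>0 < real l\<close> show "real (card (V \<inter> {p..<p+l})) / real l \<le> e"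
      by (simp add: divide_le_eq)
  qed
  thus "upper_banach_density V \<le> 0 + e" by simp
qed

section \<open>Words of a subshift\<close>

lemma contained_prefix: "x \<in> P \<Longrightarrow> contained (map x [0..<n]) P"
  by (auto simp: contained_def is_prefix_def)

lemma set_subset_if_contained:
  assumes "contained w P" "P \<subseteq> fullshift k"
  shows "set w \<subseteq> {..<k}"
proof
  fix c assume "c \<in> set w"
  then obtain i where i: "i < length w" "w ! i = c" by (auto simp: in_set_conv_nth)
  obtain x where "x \<in> P" "is_prefix w x" using assms(1) by (auto simp: contained_def)
  hence "x \<in> fullshift k" "x i = c" using i assms(2) by (auto simp: is_prefix_def)
  thus "c \<in> {..<k}" by (auto simp: fullshift_def)
qed

lemma contained_take_drop:
  assumes "shift ` P \<subseteq> P" "contained u P" "i + m \<le> length u"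
  shows "contained (take m (drop i u)) P"
proof -
  obtain x where x: "x \<in> P" "is_prefix u x" using assms(2) by (auto simp: contained_def)
  have "(shift ^^ i) x \<in> P"
    using x(1) assms(1) by (induction i) auto
  moreover have "is_prefix (take m (drop i u)) ((shift ^^ i) x)"
    using x(2) assms(3) by (auto simp: is_prefix_def funpow_shift_apply)
  ultimately show ?thesis by (auto simp: contained_def)
qed

definition bad_positions :: "(nat \<Rightarrow> nat) set \<Rightarrow> nat \<Rightarrow> nat list \<Rightarrow> nat set" where
  "bad_positions P m u =
     {i. i < length u \<and> \<not> (i + m \<le> length u \<and> contained (take m (drop i u)) P)}"

lemma bad_positions_subset: "bad_positions P m u \<subseteq> {..<length u}"
  by (auto simp: bad_positions_def)

lemma finite_bad_positions [simp]: "finite (bad_positions P m u)"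
  using bad_positions_subset by (rule finite_subset) simp

lemma bad_positions_append:
  "bad_positions P m (u @ v) \<subseteq> bad_positions P m u \<union> (+) (length u) ` bad_positions P m v"
proof
  fix i assume i: "i \<in> bad_positions P m (u @ v)"
  show "i \<in> bad_positions P m u \<union> (+) (length u) ` bad_positions P m v"
  proof (cases "i < length u")
    case True
    with i show ?thesis by (auto simp: bad_positions_def)
  next
    case False
    then obtain i' where "i = length u + i'" by (metis le_iff_add not_less)
    with i show ?thesis by (auto simp: bad_positions_def)
  qed
qed

lemma bad_positions_contained:
  assumes "shift ` P \<subseteq> P" "contained u P"
  shows "bad_positions P m u \<subseteq> {i. i < length u \<and> length u < i + m}"
  using contained_take_drop[OF assms] by (auto simp: bad_positions_def)

lemma bad_positions_replicate:
  assumes "shift ` P \<subseteq> P" "contained Y P" "length Y = j"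
  shows "bad_positions P m (concat (replicate N Y)) \<subseteq> {i. j < i mod j + m}"
proof (induction N)
  case (Suc N)
  have "bad_positions P m Y \<subseteq> {i. j < i mod j + m}"
  proof
    fix i assume "i \<in> bad_positions P m Y"
    hence "i < j" "j < i + m" using bad_positions_contained[OF assms(1,2), of m] assms(3) by auto
    thus "i \<in> {i. j < i mod j + m}" by simp
  qed
  have "bad_positions P m (concat (replicate (Suc N) Y))
      \<subseteq> bad_positions P m Y \<union> (+) j ` bad_positions P m (concat (replicate N Y))"
    using bad_positions_append[of P m Y] assms(3) by simp
  also have "\<dots> \<subseteq> {i. j < i mod j + m} \<union> (+) j ` {i. j < i mod j + m}"
    using \<open>bad_positions P m Y \<subseteq> _\<close> Suc.IH by blast
  also have "\<dots> \<subseteq> {i. j < i mod j + m}" by auto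
  finally show ?case .
qed (simp add: bad_positions_def)

section \<open>Counting positions in intervals\<close>

lemma card_image_plus_Int_interval:
  "card ((+) s ` S \<inter> {a..<b}) = card (S \<inter> {a - s..<b - s})" for s :: nat
proof -
  have "(+) s ` S \<inter> {a..<b} = (+) s ` (S \<inter> {a - s..<b - s})"
    by (auto simp: image_iff)
  thus ?thesis by (simp add: card_image)
qed

lemma card_mod_tail_short:
  assumes "b - a \<le> j"
  shows "card ({i. j < i mod j + m} \<inter> {a..<b}) \<le> m"
proof (cases "j = 0")
  case False
  have "\<not> u < v" if "u \<in> {a..<b}" "v \<in> {a..<b}" "u mod j = v mod j" for u v
  proof
    assume "u < v"
    hence "j dvd v - u" using that(3) mod_eq_dvd_iff_nat[of u v j] by simp
    moreover have "0 < v - u" "v - u < j" using \<open>u < v\<close> that(1,2) assms by auto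
    ultimately show False by (simp add: nat_dvd_not_less)
  qed
  hence "inj_on (\<lambda>i. i mod j) {a..<b}"
    by (intro inj_onI) (metis linorder_neqE_nat)
  hence "card ({i. j < i mod j + m} \<inter> {a..<b}) \<le> card {j - m..<j}"
    using False by (intro card_inj_on_le[where f = "\<lambda>i. i mod j"]) (auto intro: inj_on_subset)
  thus ?thesis by simp
qed (use assms in simp)

lemma card_mod_tail:
  assumes "0 < j"
  shows "real (card ({i. j < i mod j + m} \<inter> {a..<b})) \<le> real m * real (b - a) / j + m"
proof (induction "b - a" arbitrary: a rule: less_induct)
  case less
  let ?S = "{i. j < i mod j + m}"
  show ?case
  proof (cases "b - a \<le> j")
    case True
    thus ?thesis using card_mod_tail_short[OF True, of m] by (simp add: add_increasing)
  next
    case False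
    have "card (?S \<inter> {a..<b}) \<le> card (?S \<inter> {a..<a + j}) + card (?S \<inter> {a + j..<b})"
      using False by (subst card_Un_disjoint[symmetric]) (auto intro: card_mono)
    moreover have "b - (a + j) < b - a" using False assms by simp
    ultimately have "real (card (?S \<inter> {a..<b})) \<le> m + (real m * real (b - (a + j)) / j + m)"
      using card_mod_tail_short[of "a + j" a j m] less[of "a + j"] by linarith
    also have "\<dots> = real m * real (b - a) / j + m"
      using False assms by (simp add: field_simps)
    finally show ?thesis .
  qed
qed

text \<open>Separating the error in initial and final segments from the error 2 \<beta> in arbitrary
  intervals is what makes this notion stable under concatenation.\<close>
definition sparse_block :: "real \<Rightarrow> real \<Rightarrow> nat \<Rightarrow> nat set \<Rightarrow> bool" where
  "sparse_block \<alpha> \<beta> L S \<longleftrightarrow> S \<subseteq> {..<L} \<and> real (card S) \<le> \<alpha> * L \<and>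
     (\<forall>a b. real (card (S \<inter> {a..<b})) \<le> \<alpha> * real (b - a) + 2 * \<beta>
        \<and> real (card (S \<inter> {0..<b})) \<le> \<alpha> * b + \<beta>
        \<and> real (card (S \<inter> {a..<b})) \<le> \<alpha> * real (L - a) + \<beta>)"

lemma sparse_blockD:
  assumes "sparse_block \<alpha> \<beta> L S"
  shows "S \<subseteq> {..<L}" "finite S" "real (card (S \<inter> I)) \<le> \<alpha> * L"
    and "real (card (S \<inter> {a..<b})) \<le> \<alpha> * real (b - a) + 2 * \<beta>"
    and "real (card (S \<inter> {0..<b})) \<le> \<alpha> * b + \<beta>"
    and "real (card (S \<inter> {a..<b})) \<le> \<alpha> * real (L - a) + \<beta>"
proof -
  show "S \<subseteq> {..<L}" using assms by (simp add: sparse_block_def)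
  thus "finite S" by (rule finite_subset) simp
  hence "real (card (S \<inter> I)) \<le> real (card S)" by (intro of_nat_mono card_mono) auto
  thus "real (card (S \<inter> I)) \<le> \<alpha> * L" using assms by (simp add: sparse_block_def)
qed (use assms in \<open>simp_all add: sparse_block_def\<close>)

lemma sparse_block_subset:
  assumes "sparse_block \<alpha> \<beta> L S" "S' \<subseteq> S"
  shows "sparse_block \<alpha> \<beta> L S'"
proof -
  have "real (card (S' \<inter> I)) \<le> real (card (S \<inter> I))" for I
    using sparse_blockD(2)[OF assms(1)] assms(2) by (intro of_nat_mono card_mono) auto
  moreover have "real (card S') \<le> real (card S)"
    using sparse_blockD(2)[OF assms(1)] assms(2) by (intro of_nat_mono card_mono)
  ultimately show ?thesis using assms unfolding sparse_block_def by (meson order_trans subset_trans)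
qed

lemma sparse_blockI:
  assumes "S \<subseteq> {..<L}" "real (card S) \<le> \<alpha> * L" "0 \<le> \<beta>"
    and "\<And>a b. real (card (S \<inter> {a..<b})) \<le> \<alpha> * real (b - a) + \<beta>"
  shows "sparse_block \<alpha> \<beta> L S"
proof -
  have "finite S" using assms(1) finite_subset[of S "{..<L}"] by simp
  hence "real (card (S \<inter> {a..<b})) \<le> real (card (S \<inter> {a..<L}))" for a b
    using assms(1) by (intro of_nat_mono card_mono) auto
  with assms show ?thesis unfolding sparse_block_def by (smt (verit) diff_zero of_nat_0)
qed

lemma card_Un_image_plus_Int_interval:
  "real (card ((S1 \<union> (+) L1 ` S2) \<inter> {a..<b}))
    \<le> real (card (S1 \<inter> {a..<b})) + real (card (S2 \<inter> {a - L1..<b - L1}))" for L1 :: nat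
proof -
  have "card ((S1 \<union> (+) L1 ` S2) \<inter> {a..<b}) \<le> card (S1 \<inter> {a..<b}) + card ((+) L1 ` S2 \<inter> {a..<b})"
    by (metis Int_Un_distrib2 card_Un_le)
  thus ?thesis by (simp add: card_image_plus_Int_interval)
qed

lemma sparse_block_append:
  assumes "0 \<le> \<alpha>" and S1: "sparse_block \<alpha> \<beta> L1 S1" and S2: "sparse_block \<alpha> \<beta> L2 S2"
  shows "sparse_block \<alpha> \<beta> (L1 + L2) (S1 \<union> (+) L1 ` S2)"
proof -
  let ?S = "S1 \<union> (+) L1 ` S2"
  note split = card_Un_image_plus_Int_interval[of S1 L1 S2]
  have low: "S2 \<inter> {a - L1..<b - L1} = {}" if "b \<le> L1" for a b
    using that by simp
  have high: "S1 \<inter> {a..<b} = {}" if "L1 \<le> a" for a b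
    using that sparse_blockD(1)[OF S1] by auto
  have "card ?S \<le> card S1 + card S2"
    by (metis card_Un_le card_image inj_on_add)
  hence total: "real (card ?S) \<le> \<alpha> * real (L1 + L2)"
    using sparse_blockD(3)[OF S1, of UNIV] sparse_blockD(3)[OF S2, of UNIV] by (simp add: distrib_left)
  have gen: "real (card (?S \<inter> {a..<b})) \<le> \<alpha> * real (b - a) + 2 * \<beta>" for a b
  proof -
    consider "b \<le> L1" | "L1 \<le> a" | "a < L1" "L1 < b" by linarith
    thus ?thesis
    proof cases
      case 1
      thus ?thesis using split[of a b] sparse_blockD(4)[OF S1, of a b] low by simp
    next
      case 2
      thus ?thesis using split[of a b] sparse_blockD(4)[OF S2, of "a - L1" "b - L1"] high by simp
    next
      case 3
      hence "real (b - a) = real (L1 - a) + real (b - L1)" by simp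
      thus ?thesis
        using split[of a b] sparse_blockD(6)[OF S1, of a b] sparse_blockD(5)[OF S2, of "b - L1"] 3
        by (simp add: algebra_simps)
    qed
  qed
  have pre: "real (card (?S \<inter> {0..<b})) \<le> \<alpha> * b + \<beta>" for b
  proof (cases "b \<le> L1")
    case True
    thus ?thesis using split[of 0 b] sparse_blockD(5)[OF S1, of b] low by simp
  next
    case False
    thus ?thesis
      using split[of 0 b] sparse_blockD(3)[OF S1, of "{0..<b}"] sparse_blockD(5)[OF S2, of "b - L1"]
      by (simp add: algebra_simps)
  qed
  have suf: "real (card (?S \<inter> {a..<b})) \<le> \<alpha> * real (L1 + L2 - a) + \<beta>" for a b
  proof (cases "a \<le> L1")
    case True
    hence "real (L1 + L2 - a) = real (L1 - a) + real L2" by simp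
    thus ?thesis
      using split[of a b] sparse_blockD(6)[OF S1, of a b] sparse_blockD(3)[OF S2, of "{a - L1..<b - L1}"]
      by (simp add: algebra_simps)
  next
    case False
    hence "L2 - (a - L1) = L1 + L2 - a" by simp
    thus ?thesis using split[of a b] sparse_blockD(6)[OF S2, of "a - L1" "b - L1"] high[of a b] by simp
  qed
  show ?thesis
    using sparse_blockD(1)[OF S1] sparse_blockD(1)[OF S2] total gen pre suf
    unfolding sparse_block_def by auto
qed

lemma sparse_block_concat:
  assumes "0 \<le> \<alpha>" "0 \<le> \<beta>"
    and "\<And>u. u \<in> set us \<Longrightarrow> sparse_block \<alpha> \<beta> (length u) (bad_positions P m u)"
  shows "sparse_block \<alpha> \<beta> (length (concat us)) (bad_positions P m (concat us))"
  using assms(3)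
proof (induction us)
  case Nil
  thus ?case using assms(1,2) by (simp add: sparse_block_def bad_positions_def)
next
  case (Cons u us)
  hence "sparse_block \<alpha> \<beta> (length u + length (concat us))
      (bad_positions P m u \<union> (+) (length u) ` bad_positions P m (concat us))"
    by (intro sparse_block_append[OF assms(1)]) auto
  thus ?case using bad_positions_append[of P m u] by (auto intro: sparse_block_subset)
qed

lemma bad_positions_block:
  assumes "shift ` P \<subseteq> P" "contained Cw P" "contained Y P" "length Y = j"
  shows "bad_positions P m (A @ Cw @ concat (replicate N Y)) \<subseteq>
     {..<length A} \<union> (+) (length A) ` {i. i < length Cw \<and> length Cw < i + m}
       \<union> (+) (length A + length Cw) ` {i. j < i mod j + m}"
proof -
  have "bad_positions P m (A @ Cw @ concat (replicate N Y)) \<subseteq>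
      bad_positions P m A \<union> (+) (length A) `
        (bad_positions P m Cw \<union> (+) (length Cw) ` bad_positions P m (concat (replicate N Y)))"
    by (intro order_trans[OF bad_positions_append] Un_mono image_mono subset_refl)
  also have "\<dots> \<subseteq> {..<length A} \<union> (+) (length A) `
        ({i. i < length Cw \<and> length Cw < i + m} \<union> (+) (length Cw) ` {i. j < i mod j + m})"
    by (intro Un_mono image_mono bad_positions_subset bad_positions_contained
        bad_positions_replicate assms)
  finally show ?thesis by (simp add: image_Un image_image add.assoc Un_assoc)
qed

lemma card_bad_positions_block:
  assumes "shift ` P \<subseteq> P" "contained Cw P" "contained Y P" "length Y = j" "0 < j"
  shows "real (card (bad_positions P m (A @ Cw @ concat (replicate N Y)) \<inter> {p..<q}))
     \<le> length A + 2 * m + real m * real (q - p) / j"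
proof -
  let ?a = "length A" and ?c = "length Cw"
  let ?X = "{..<?a} \<inter> {p..<q}"
  let ?Z = "{i. i < ?c \<and> ?c < i + m}"
  let ?Y = "(+) ?a ` ?Z \<inter> {p..<q}"
  let ?W = "(+) (?a + ?c) ` {i. j < i mod j + m} \<inter> {p..<q}"
  have "bad_positions P m (A @ Cw @ concat (replicate N Y)) \<inter> {p..<q} \<subseteq> ?X \<union> ?Y \<union> ?W"
    using bad_positions_block[OF assms(1-4), of m A N] by blast
  hence "card (bad_positions P m (A @ Cw @ concat (replicate N Y)) \<inter> {p..<q}) \<le> card (?X \<union> ?Y \<union> ?W)"
    by (rule card_mono[rotated]) simp
  also have "\<dots> \<le> card ?X + card ?Y + card ?W"
    using card_Un_le[of "?X \<union> ?Y" ?W] card_Un_le[of ?X ?Y] by linarith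
  finally have "real (card (bad_positions P m (A @ Cw @ concat (replicate N Y)) \<inter> {p..<q}))
      \<le> real (card ?X) + real (card ?Y) + real (card ?W)"
    by (simp only: of_nat_add[symmetric] of_nat_le_iff)
  also have "\<dots> \<le> real ?a + real m + (real m * real (q - p) / j + real m)"
  proof (intro add_mono)
    show "real (card ?X) \<le> ?a"
      by (rule of_nat_mono, rule order_trans[OF card_mono[of "{..<?a}"]]) auto
    have "card ?Y \<le> card ?Z"
      by (rule order_trans[OF card_mono card_image_le]) auto
    also have "\<dots> \<le> card {?c - m..<?c}" by (intro card_mono) auto
    finally show "real (card ?Y) \<le> m" by simp
    have "real (card ?W) \<le> real m * real (q - (?a + ?c) - (p - (?a + ?c))) / j + m"
      unfolding card_image_plus_Int_interval by (rule card_mod_tail[OF assms(5)])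
    also have "\<dots> \<le> real m * real (q - p) / j + m"
      using assms(5) by (intro add_right_mono divide_right_mono mult_left_mono) auto
    finally show "real (card ?W) \<le> real m * real (q - p) / j + m" .
  qed
  finally show ?thesis by simp
qed

lemma sparse_block_bad_positions_block:
  fixes \<alpha> :: real
  assumes "shift ` P \<subseteq> P" "contained Cw P" "contained Y P" "length Y = j" "0 < j"
    and "length A \<le> N" "1 \<le> N" "real (3 * m + 1) \<le> \<alpha> * j"
  defines "U \<equiv> A @ Cw @ concat (replicate N Y)"
  shows "sparse_block \<alpha> (length A + 2 * m) (length U) (bad_positions P m U)"
proof (rule sparse_blockI)
  let ?L = "real (length U)"
  have count: "real (card (bad_positions P m U \<inter> {p..<q}))
      \<le> length A + 2 * m + real m * real (q - p) / j" for p q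
    unfolding U_def by (rule card_bad_positions_block[OF assms(1-5)])
  have "real m \<le> \<alpha> * j" using assms(8) by simp
  hence density: "real m * real (q - p) / j \<le> \<alpha> * real (q - p)" for p q
    using assms(5) mult_right_mono[of "real m" "\<alpha> * j" "real (q - p)"]
    by (simp add: divide_le_eq mult_ac)
  thus "real (card (bad_positions P m U \<inter> {p..<q})) \<le> \<alpha> * real (q - p) + (length A + 2 * m)" for p q
    using count[of p q] density[of q p] by linarith
  have "real N * j \<le> ?L" using assms(4) by (simp add: U_def length_concat sum_list_replicate)
  hence N_le: "real N \<le> ?L / j" using assms(5) by (simp add: le_divide_eq)
  have "length A + 2 * m \<le> (1 + 2 * m) * N"
    using assms(6) mult_le_mono2[OF assms(7), of "2 * m"] by (simp add: algebra_simps)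
  hence "real (length A + 2 * m) \<le> real (1 + 2 * m) * real N"
    by (metis of_nat_mono of_nat_mult)
  also have "\<dots> \<le> real (1 + 2 * m) * (?L / j)"
    using N_le by (rule mult_left_mono) simp
  finally have A_le: "real (length A + 2 * m) \<le> real (1 + 2 * m) * (?L / j)" .
  have "bad_positions P m U \<inter> {0..<length U} = bad_positions P m U"
    using bad_positions_subset[of P m U] by auto
  hence "real (card (bad_positions P m U)) \<le> real (length A + 2 * m) + real m * (?L / j)"
    using count[of 0 "length U"] by simp
  also have "\<dots> \<le> real (1 + 2 * m) * (?L / j) + real m * (?L / j)"
    using A_le by simp
  also have "\<dots> = real (3 * m + 1) * (?L / j)" by (simp add: algebra_simps)
  also have "\<dots> \<le> (\<alpha> * j) * (?L / j)"
    using assms(8) by (rule mult_right_mono) simp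
  also have "\<dots> = \<alpha> * ?L" using assms(5) by simp
  finally show "real (card (bad_positions P m U)) \<le> \<alpha> * ?L" .
qed (simp_all add: bad_positions_subset)

section \<open>The point T(y)\<close>

locale T_construction =
  fixes k :: nat and P :: "(nat \<Rightarrow> nat) set" and C :: "nat \<Rightarrow> nat list"
    and A1 :: "nat list" and y :: "nat \<Rightarrow> nat"
  assumes subshift: "subshift k P"
    and C_enumerates: "C ` {1..} = {w. w \<noteq> [] \<and> contained w P}"
    and A1_alphabet: "set A1 \<subseteq> {..<k}"
    and A1_not_contained: "\<not> contained A1 P"
    and y_in_P: "y \<in> P"
begin

abbreviation A :: "nat \<Rightarrow> nat list" where "A \<equiv> Aw C A1 y"

abbreviation T :: "nat \<Rightarrow> nat" where "T \<equiv> Tmap C A1 y"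

definition B :: "nat \<Rightarrow> nat list" where
  "B n = C n @ concat (replicate ((length (A n))\<^sup>2) (map y [0..<n]))"

lemma shift_image_subset: "shift ` P \<subseteq> P"
  and P_subset_fullshift: "P \<subseteq> fullshift k"
  using subshift by (auto simp: subshift_def)

lemma P_closed:
  assumes "z \<in> fullshift k" "\<And>e. 0 < e \<Longrightarrow> \<exists>u\<in>P. shiftd u z < e"
  shows "z \<in> P"
  using subshift assms by (auto simp: subshift_def)

lemma A1_nonempty: "A1 \<noteq> []"
  using A1_not_contained y_in_P by (auto simp: contained_def is_prefix_def)

lemma C_contained: "1 \<le> n \<Longrightarrow> contained (C n) P"
  using C_enumerates by auto

lemma prefix_y_contained: "contained (map y [0..<n]) P"
  using y_in_P by (rule contained_prefix)

lemma A_Suc: "1 \<le> n \<Longrightarrow> A (Suc n) = A n @ B n @ A n"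
  by (simp add: B_def)

lemma length_A_ge: "n \<le> length (A n)"
proof (induction n)
  case (Suc n)
  show ?case
  proof (cases "n = 0")
    case True
    thus ?thesis using A1_nonempty by (simp add: Suc_le_eq)
  next
    case False
    thus ?thesis using Suc A_Suc[of n] by simp
  qed
qed simp

lemma A_prefix: "n \<le> n' \<Longrightarrow> \<exists>s. A n' = A n @ s"
proof (induction n' rule: dec_induct)
  case (step m)
  thus ?case using A_Suc[of m] by (cases "m = 0") auto
qed simp

lemma nth_A: "n \<le> n' \<Longrightarrow> i < length (A n) \<Longrightarrow> A n' ! i = A n ! i"
  using A_prefix[of n n'] by (auto simp: nth_append)

lemma Tmap_eq: "T = (\<lambda>i. A (Suc i) ! i)"
  unfolding Tmap_def
proof (rule the_equality)
  have "i < length (A (Suc i))" for i using length_A_ge[of "Suc i"] by simp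
  thus "\<forall>n\<ge>1. is_prefix (A n) (\<lambda>i. A (Suc i) ! i)"
    unfolding is_prefix_def by (metis max.cobounded1 max.cobounded2 nth_A)
  fix x assume x: "\<forall>n\<ge>1. is_prefix (A n) x"
  show "x = (\<lambda>i. A (Suc i) ! i)"
  proof
    fix i
    show "x i = A (Suc i) ! i"
      using x[rule_format, of "Suc i"] \<open>i < length (A (Suc i))\<close>
      by (simp add: is_prefix_def del: Aw.simps)
  qed
qed

lemma T_nth: "i < length (A n) \<Longrightarrow> T i = A n ! i"
  unfolding Tmap_eq using length_A_ge[of "Suc i"]
  by (metis Suc_le_eq max.cobounded1 max.cobounded2 nth_A)

lemma A_prefix_T: "is_prefix (A n) T"
  by (simp add: is_prefix_def T_nth)

lemma T_window:
  "t + M \<le> length (A n) \<Longrightarrow> take M (drop t (A n)) = map (\<lambda>i. T (t + i)) [0..<M]"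
  by (intro nth_equalityI) (simp_all add: T_nth[where n = n])

lemma T_at_C: "1 \<le> n \<Longrightarrow> i < length (C n) \<Longrightarrow> T (length (A n) + i) = C n ! i"
  using T_nth[of "length (A n) + i" "Suc n"] by (simp add: A_Suc B_def nth_append del: Aw.simps)

lemma T_at_second_A:
  "1 \<le> n \<Longrightarrow> i < length (A n) \<Longrightarrow> T (length (A n) + length (B n) + i) = T i"
  using T_nth[of "length (A n) + length (B n) + i" "Suc n"] T_nth[of i n]
  by (simp add: A_Suc nth_append del: Aw.simps)

lemma A_decomp:
  assumes "1 \<le> n0" "n0 \<le> n"
  obtains js where "set js \<subseteq> {n0..<n}" "A n = concat (map (\<lambda>j. A n0 @ B j) js) @ A n0"
proof -
  have "\<exists>js. set js \<subseteq> {n0..<n} \<and> A n = concat (map (\<lambda>j. A n0 @ B j) js) @ A n0"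
    using assms(2)
  proof (induction n rule: dec_induct)
    case base
    show ?case by (rule exI[of _ "[]"]) simp
  next
    case (step n)
    then obtain js where "set js \<subseteq> {n0..<n}" "A n = concat (map (\<lambda>j. A n0 @ B j) js) @ A n0"
      by blast
    moreover have "A (Suc n) = A n @ B n @ A n" using A_Suc step assms(1) by simp
    ultimately show ?case using step by (intro exI[of _ "js @ [n] @ js"]) auto
  qed
  thus ?thesis using that by blast
qed

lemma T_in_fullshift: "T \<in> fullshift k"
proof -
  have "set (A n) \<subseteq> {..<k}" for n
  proof (induction n)
    case (Suc n)
    have "set (C n) \<subseteq> {..<k}" if "1 \<le> n"
      using C_contained[OF that] P_subset_fullshift by (rule set_subset_if_contained)
    moreover have "set (map y [0..<n]) \<subseteq> {..<k}"
      using prefix_y_contained P_subset_fullshift by (rule set_subset_if_contained)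
    ultimately show ?case using Suc A1_alphabet by (cases "n = 0") (auto simp: A_Suc B_def)
  qed (use A1_alphabet in simp)
  moreover have "T i \<in> set (A (Suc i))" for i
    using T_nth[of i "Suc i"] length_A_ge[of "Suc i"] by (simp del: Aw.simps)
  ultimately show ?thesis by (auto simp: fullshift_def simp del: Aw.simps)
qed

lemma T_notin_P: "T \<notin> P"
  using A1_not_contained A_prefix_T[of 1] by (auto simp: contained_def)

lemma T_returns: "\<exists>t\<ge>N. \<forall>i<M. T (t + i) = T i"
proof -
  let ?n = "max (max M N) 1"
  have "\<forall>i<M. T (length (A ?n) + length (B ?n) + i) = T i"
    using length_A_ge[of ?n] by (auto intro: T_at_second_A)
  moreover have "N \<le> length (A ?n) + length (B ?n)" using length_A_ge[of ?n] by linarith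
  ultimately show ?thesis by blast
qed

lemma T_visits_words:
  assumes "z \<in> P"
  shows "\<exists>t\<ge>N. \<forall>i<M. T (t + i) = z i"
proof -
  define L where "L = Suc (M + (\<Sum>n<N. length (C n)))"
  have "map z [0..<L] \<in> C ` {1..}"
    unfolding C_enumerates using contained_prefix[OF assms] by (simp add: L_def del: upt_Suc)
  then obtain n where n: "1 \<le> n" "C n = map z [0..<L]" by auto
  have "N \<le> n"
  proof (rule ccontr)
    assume "\<not> N \<le> n"
    hence "length (C n) \<le> (\<Sum>n<N. length (C n))" by (intro member_le_sum) auto
    with n(2) show False by (simp add: L_def)
  qed
  hence "N \<le> length (A n)" using length_A_ge[of n] by linarith
  moreover have "M < L" by (simp add: L_def)
  hence "\<forall>i<M. T (length (A n) + i) = z i"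
    using T_at_C[OF n(1)] n(2) by (simp del: upt_Suc)
  ultimately show ?thesis by blast
qed

lemma T_in_omega_sigma: "T \<in> omega_sigma k T"
  using infinite_close_returns[OF T_returns] T_in_fullshift by (simp add: omega_sigma_def)

lemma P_subset_omega_sigma: "P \<subseteq> omega_sigma k T"
  using infinite_close_returns[OF T_visits_words] P_subset_fullshift
  by (auto simp: omega_sigma_def)

lemma T_in_Rec: "T \<in> Rec k"
proof -
  have "visits k T (sball k T e) \<noteq> {}" if e: "0 < e" for e
  proof -
    obtain t where "1 \<le> t" "shiftd ((shift ^^ t) T) T < e"
      using infinite_close_returns[OF T_returns e]
      unfolding infinite_nat_iff_unbounded_le by blast
    thus ?thesis
      using funpow_shift_fullshift[OF T_in_fullshift] by (auto simp: visits_def sball_def)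
  qed
  thus ?thesis using T_in_fullshift by (simp add: Rec_def)
qed

lemma card_bad_positions_A:
  fixes \<alpha> :: real
  assumes "0 < \<alpha>" "1 \<le> n0" "real (3 * m + 1) \<le> \<alpha> * n0" "n0 \<le> n"
  shows "real (card (bad_positions P m (A n) \<inter> {p..<q}))
    \<le> \<alpha> * real (q - p) + real (3 * length (A n0) + 4 * m)"
proof -
  let ?\<beta> = "real (length (A n0) + 2 * m)"
  obtain js where js: "set js \<subseteq> {n0..<n}" "A n = concat (map (\<lambda>j. A n0 @ B j) js) @ A n0"
    using A_decomp[OF assms(2,4)] .
  let ?w = "concat (map (\<lambda>j. A n0 @ B j) js)"
  have "sparse_block \<alpha> ?\<beta> (length (A n0 @ B j)) (bad_positions P m (A n0 @ B j))"
    if "n0 \<le> j" for j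
  proof -
    have "length (A n0) \<le> length (A j)" using A_prefix[OF that] by auto
    also have "\<dots> \<le> (length (A j))\<^sup>2" by (simp add: power2_eq_square le_square)
    finally have "length (A n0) \<le> (length (A j))\<^sup>2" .
    moreover have "1 \<le> length (A j)" using length_A_ge[of j] that assms(2) by linarith
    hence "1 \<le> (length (A j))\<^sup>2" by (rule one_le_power)
    moreover have "real (3 * m + 1) \<le> \<alpha> * j"
      using assms(1,3) that by (smt (verit) mult_left_mono of_nat_mono)
    ultimately show ?thesis
      unfolding B_def using that assms(2)
      by (intro sparse_block_bad_positions_block shift_image_subset C_contained prefix_y_contained)
        simp_all
  qed
  hence "sparse_block \<alpha> ?\<beta> (length ?w) (bad_positions P m ?w)"
    using js(1) assms(1) by (intro sparse_block_concat) auto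
  hence "real (card (bad_positions P m ?w \<inter> {p..<q})) \<le> \<alpha> * real (q - p) + 2 * ?\<beta>"
    by (simp add: sparse_block_def)
  moreover have "real (card (bad_positions P m (A n) \<inter> {p..<q}))
      \<le> real (card (bad_positions P m ?w \<inter> {p..<q})) + length (A n0)"
  proof -
    have "card (bad_positions P m (A n) \<inter> {p..<q})
        \<le> card (bad_positions P m ?w \<inter> {p..<q} \<union> (+) (length ?w) ` bad_positions P m (A n0))"
      unfolding js(2) using bad_positions_append[of P m ?w "A n0"] by (intro card_mono) auto
    also have "\<dots> \<le> card (bad_positions P m ?w \<inter> {p..<q}) + card (bad_positions P m (A n0))"
      by (rule order_trans[OF card_Un_le add_left_mono[OF card_image_le]]) simp
    also have "card (bad_positions P m (A n0)) \<le> length (A n0)"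
      using card_mono[OF finite_lessThan bad_positions_subset] by simp
    finally show ?thesis by simp
  qed
  ultimately show ?thesis by simp
qed

definition bad_windows :: "nat \<Rightarrow> nat set" where
  "bad_windows m = {t. \<not> contained (map (\<lambda>i. T (t + i)) [0..<m]) P}"

lemma bad_windows_subset_bad_positions:
  "bad_windows m \<inter> {..<length (A n)} \<subseteq> bad_positions P m (A n)"
  using T_window by (auto simp: bad_windows_def bad_positions_def)

lemma card_bad_windows:
  fixes \<alpha> :: real
  assumes "0 < \<alpha>"
  shows "\<exists>K. \<forall>p l. real (card (bad_windows m \<inter> {p..<p+l})) \<le> \<alpha> * l + K"
proof -
  obtain n0 :: nat where n0_big: "real (3 * m + 1) / \<alpha> < n0" using reals_Archimedean2 by blast
  have "0 \<le> real (3 * m + 1) / \<alpha>" using assms by simp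
  with n0_big have "1 \<le> n0" by linarith
  moreover have "real (3 * m + 1) \<le> \<alpha> * n0"
    using n0_big assms by (simp add: pos_divide_less_eq mult.commute)
  ultimately have n0: "1 \<le> n0" "real (3 * m + 1) \<le> \<alpha> * n0" .
  let ?K = "real (3 * length (A n0) + 4 * m)"
  have "real (card (bad_windows m \<inter> {p..<p+l})) \<le> \<alpha> * l + ?K" for p l
  proof -
    let ?n = "max n0 (p + l)"
    have "bad_windows m \<inter> {p..<p+l} \<subseteq> bad_positions P m (A ?n) \<inter> {p..<p+l}"
      using bad_windows_subset_bad_positions[of m ?n] length_A_ge[of ?n] by auto
    hence "card (bad_windows m \<inter> {p..<p+l}) \<le> card (bad_positions P m (A ?n) \<inter> {p..<p+l})"
      by (intro card_mono) auto
    also have "real \<dots> \<le> \<alpha> * real (p + l - p) + ?K"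
      using assms n0 by (intro card_bad_positions_A) auto
    finally show ?thesis by simp
  qed
  thus ?thesis by blast
qed

lemma upper_banach_density_subset_bad_windows:
  assumes "V \<subseteq> bad_windows m"
  shows "upper_banach_density V \<le> 0"
proof (rule upper_banach_density_nonpos)
  fix \<alpha> :: real assume "0 < \<alpha>"
  then obtain K where K: "\<And>p l. real (card (bad_windows m \<inter> {p..<p+l})) \<le> \<alpha> * l + K"
    using card_bad_windows by blast
  have "card (V \<inter> {p..<p+l}) \<le> card (bad_windows m \<inter> {p..<p+l})" for p l
    using assms by (intro card_mono) auto
  thus "\<exists>K. \<forall>p l. real (card (V \<inter> {p..<p+l})) \<le> \<alpha> * l + K"
    using K by (meson of_nat_le_iff order_trans)
qed

lemma omega_B_subset_P: "omega_B k T \<subseteq> P"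
proof
  fix z assume z: "z \<in> omega_B k T"
  show "z \<in> P"
  proof (rule ccontr)
    assume "z \<notin> P"
    moreover have "z \<in> fullshift k" using z by (simp add: omega_B_def)
    ultimately obtain e where "0 < e" and far: "\<And>u. u \<in> P \<Longrightarrow> \<not> shiftd u z < e"
      using P_closed by blast
    then obtain M where M: "\<And>x y. (\<And>i. i < M \<Longrightarrow> x i = y i) \<Longrightarrow> shiftd x y < e"
      using obtain_agreement_length by blast
    have not_word: "\<not> contained (map z [0..<M]) P"
    proof
      assume "contained (map z [0..<M]) P"
      then obtain u where "u \<in> P" "is_prefix (map z [0..<M]) u" by (auto simp: contained_def)
      hence "shiftd u z < e" by (intro M) (simp add: is_prefix_def)
      with far \<open>u \<in> P\<close> show False by blast
    qed
    have "visits k T (sball k z (1 / 2 ^ M)) \<subseteq> bad_windows M"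
    proof
      fix t assume "t \<in> visits k T (sball k z (1 / 2 ^ M))"
      hence "T (t + i) = z i" if "i < M" for i
        using agree_if_shiftd_less[OF _ that, of "(shift ^^ t) T" z]
        by (simp add: visits_def sball_def funpow_shift_apply)
      hence window: "map (\<lambda>i. T (t + i)) [0..<M] = map z [0..<M]" by simp
      show "t \<in> bad_windows M" unfolding bad_windows_def mem_Collect_eq window by (rule not_word)
    qed
    hence "upper_banach_density (visits k T (sball k z (1 / 2 ^ M))) \<le> 0"
      by (rule upper_banach_density_subset_bad_windows)
    moreover have "upper_banach_density (visits k T (sball k z (1 / 2 ^ M))) > 0"
      using z by (simp add: omega_B_def)
    ultimately show False by simp
  qed
qed

lemma T_notin_BR: "T \<notin> BR k"
  using omega_B_subset_P T_notin_P by (auto simp: BR_def omega_B_def)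

end

theorem proposition3p2:
  fixes k :: nat and P :: "(nat \<Rightarrow> nat) set"
    and C :: "nat \<Rightarrow> nat list" and A1 :: "nat list"
  assumes "k \<ge> 2"
    and "subshift k P" and "P \<noteq> fullshift k"
    and "C ` {1..} = {w. w \<noteq> [] \<and> contained w P}"
    and "set A1 \<subseteq> {..<k}" and "\<not> contained A1 P"
    and "\<forall>y \<in> P. (\<lambda>n. real (length (C n))) \<in> o(\<lambda>n. real (length (Aw C A1 y n)))"
  shows "\<forall>y \<in> P. Tmap C A1 y \<in> fullshift k
           \<and> omega_B k (Tmap C A1 y) \<subseteq> P \<and> P \<subset> omega_sigma k (Tmap C A1 y)
           \<and> Tmap C A1 y \<in> Rec k - BR k"
proof
  fix y assume "y \<in> P"
  with assms have "T_construction k P C A1 y" by (simp add: T_construction_def)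
  then interpret T_construction k P C A1 y .
  show "T \<in> fullshift k \<and> omega_B k T \<subseteq> P \<and> P \<subset> omega_sigma k T \<and> T \<in> Rec k - BR k"
    using T_in_fullshift omega_B_subset_P P_subset_omega_sigma T_in_omega_sigma T_notin_P
      T_in_Rec T_notin_BR by blast
qed

end
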